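(* Let $X,Y\subseteq\mathbb{P}^n$ be real closed subschemes with $X\cap Y=\operatorname{Span}(X)\cap\operatorname{Span}(Y)$. Then the Hankel spectrahedron $\Sigma_{X\cup Y}^*$ is the convex hull of $\Sigma_X^*\cup\Sigma_Y^*$, and both $\Sigma_X^*$ and $\Sigma_Y^*$ are faces of $\Sigma_{X\cup Y}^*$.
   Context: For a subscheme $Z\subseteq\mathbb{P}^n$ with ideal $I(Z)$, $\mathbb{R}[Z]=\mathbb{R}[x_0,\dots,x_n]/I(Z)$, $\Sigma_Z\subseteq\mathbb{R}[Z]_2$ is the cone of sums of squares of elements of $\mathbb{R}[Z]_1$ and $\Sigma_Z^*\subseteq\mathbb{R}[Z]_2^*$ its dual cone (the Hankel spectrahedron). $X\cup Y$ is defined by $I(X)\cap I(Y)$, and $\Sigma_X^*,\Sigma_Y^*$ are regarded as subsets of $\mathbb{R}[X\cup Y]_2^*$ via the duals of the restriction (quotient) maps $\pi_X:\mathbb{R}[X\cup Y]_2\to\mathbb{R}[X]_2$ and $\pi_Y:\mathbb{R}[X\cup Y]_2\to\mathbb{R}[Y]_2$. $\operatorname{Span}(Z)$ is the projective linear span of $Z$. *)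

theory Defs
  imports "HOL-Analysis.Analysis" "HOL-Library.Poly_Mapping" "HOL-Analysis.Finite_Function_Topology"
begin

text \<open>Real polynomials in the variables x_0, ..., x_n, represented as finitely supported
  maps from monomials (exponent vectors) to real coefficients.
  The multiplication is the library's convolution product on poly_mapping.\<close>

type_synonym monom = "nat \<Rightarrow>\<^sub>0 nat"
type_synonym rpoly = "monom \<Rightarrow>\<^sub>0 real"

definition mdeg :: "monom \<Rightarrow> nat" where
  "mdeg m = (\<Sum>i\<in>Poly_Mapping.keys m. Poly_Mapping.lookup m i)"

definition Rn :: "nat \<Rightarrow> rpoly set" where
  "Rn n = {p. \<forall>m\<in>Poly_Mapping.keys p. Poly_Mapping.keys m \<subseteq> {..n}}"

definition homog :: "nat \<Rightarrow> nat \<Rightarrow> rpoly set" where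
  "homog n d = {p. \<forall>m\<in>Poly_Mapping.keys p. Poly_Mapping.keys m \<subseteq> {..n} \<and> mdeg m = d}"

definition hcomp :: "nat \<Rightarrow> rpoly \<Rightarrow> rpoly" where
  "hcomp d f = (\<Sum>m\<in>{m\<in>Poly_Mapping.keys f. mdeg m = d}. Poly_Mapping.single m (Poly_Mapping.lookup f m))"

definition is_ideal :: "nat \<Rightarrow> rpoly set \<Rightarrow> bool" where
  "is_ideal n J \<longleftrightarrow> J \<subseteq> Rn n \<and> 0 \<in> J \<and> (\<forall>a\<in>J. \<forall>b\<in>J. a + b \<in> J)
      \<and> (\<forall>a\<in>J. \<forall>g\<in>Rn n. g * a \<in> J)"

definition hom_ideal :: "nat \<Rightarrow> rpoly set \<Rightarrow> bool" where
  "hom_ideal n J \<longleftrightarrow> is_ideal n J \<and> (\<forall>f\<in>J. \<forall>d. hcomp d f \<in> J)"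

definition ideal_gen :: "nat \<Rightarrow> rpoly set \<Rightarrow> rpoly set" where
  "ideal_gen n S = \<Inter>{J. is_ideal n J \<and> S \<subseteq> J}"

text \<open>Saturation I : (x_0,...,x_n)^\<infinity> with respect to the irrelevant ideal.\<close>
definition sat :: "nat \<Rightarrow> rpoly set \<Rightarrow> rpoly set" where
  "sat n I = {f\<in>Rn n. \<exists>k. \<forall>g\<in>homog n k. g * f \<in> I}"

text \<open>A real closed subscheme Z of P^n, given by its ideal I(Z): a saturated homogeneous ideal.\<close>
definition closed_subscheme :: "nat \<Rightarrow> rpoly set \<Rightarrow> bool" where
  "closed_subscheme n I \<longleftrightarrow> hom_ideal n I \<and> sat n I = I"

definition ideal_sum :: "rpoly set \<Rightarrow> rpoly set \<Rightarrow> rpoly set" where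
  "ideal_sum I J = {a + b |a b. a \<in> I \<and> b \<in> J}"

text \<open>Ideal of the scheme-theoretic intersection X \<inter> Y.\<close>
definition inter_ideal :: "nat \<Rightarrow> rpoly set \<Rightarrow> rpoly set \<Rightarrow> rpoly set" where
  "inter_ideal n I J = sat n (ideal_sum I J)"

text \<open>Ideal of Span(Z): generated by the linear forms in I(Z).\<close>
definition span_ideal :: "nat \<Rightarrow> rpoly set \<Rightarrow> rpoly set" where
  "span_ideal n I = sat n (ideal_gen n (I \<inter> homog n 1))"

text \<open>Linear functionals on R_2 in coordinates: L is a finitely supported vector of
  values on the degree-2 monomials, and pairing L p = L(p).\<close>
definition pairing :: "rpoly \<Rightarrow> rpoly \<Rightarrow> real" where
  "pairing L p = (\<Sum>m\<in>Poly_Mapping.keys p. Poly_Mapping.lookup p m * Poly_Mapping.lookup L m)"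

text \<open>R[Z]_2^*, identified (via the dual of the quotient map R_2 \<rightarrow> R[Z]_2) with the
  linear functionals on R_2 vanishing on I(Z)_2.\<close>
definition quad_dual :: "nat \<Rightarrow> rpoly set \<Rightarrow> rpoly set" where
  "quad_dual n I = {L. (\<forall>m\<in>Poly_Mapping.keys L. Poly_Mapping.keys m \<subseteq> {..n} \<and> mdeg m = 2)
                       \<and> (\<forall>q\<in>I \<inter> homog n 2. pairing L q = 0)}"

text \<open>Preimage in R_2 of the cone \<Sigma>_Z of sums of squares of elements of R[Z]_1.\<close>
definition sos_cone :: "nat \<Rightarrow> rpoly set \<Rightarrow> rpoly set" where
  "sos_cone n I = {q\<in>homog n 2. \<exists>fs. set fs \<subseteq> homog n 1 \<and> q - (\<Sum>f\<leftarrow>fs. f * f) \<in> I}"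

definition hankel :: "nat \<Rightarrow> rpoly set \<Rightarrow> rpoly set" where
  "hankel n I = {L\<in>quad_dual n I. \<forall>q\<in>sos_cone n I. pairing L q \<ge> 0}"

end

theory Submission
  imports Defs "HOL-Library.Function_Algebras"
begin

text \<open>A functional \<open>L\<close> on quadrics is recorded by its Gram matrix \<open>(L(x\<^sub>i x\<^sub>j))\<^sub>i\<^sub>j\<close>; it lies in
  \<open>\<Sigma>\<^sup>*\<^sub>Z\<close> iff this matrix is positive semidefinite and \<open>L\<close> vanishes on \<open>I(Z)\<^sub>2\<close>.
  The hypothesis makes every quadric of \<open>I(X) \<union> I(Y)\<close> vanish on the common real zeros \<open>W\<close> of the
  linear forms of \<open>X\<close> and \<open>Y\<close>, hence trace-orthogonal to every symmetric matrix whose columns lie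
  in \<open>W\<close>.

  Given \<open>L \<in> \<Sigma>\<^sup>*\<^sub>X\<^sub>\<union>\<^sub>Y\<close>, \<open>L\<close> vanishes on \<open>I(X)\<^sub>2 \<inter> I(Y)\<^sub>2\<close>, so \<open>L = (L - M) + M\<close> with
  \<open>L - M \<bottom> I(X)\<^sub>2\<close> and \<open>M \<bottom> I(Y)\<^sub>2\<close>; then \<open>L - M\<close> kills the linear forms of \<open>X\<close> and \<open>M\<close> those
  of \<open>Y\<close>. Successive Schur complements of the Gram matrix \<open>G\<close> of \<open>L\<close> along the linear forms of \<open>Y\<close>
  split it into positive semidefinite parts \<open>(G - P) + P\<close>, where \<open>P\<close> kills the linear forms
  of \<open>Y\<close> and \<open>G - P\<close> those of \<open>X\<close>. Now \<open>P\<close> minus the Gram matrix of \<open>M\<close> has its columns in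
  \<open>W\<close>, so \<open>P\<close> is the Gram matrix of a point of \<open>\<Sigma>\<^sup>*\<^sub>Y\<close> and \<open>G - P\<close> that of a point of \<open>\<Sigma>\<^sup>*\<^sub>X\<close>.
  The face property follows in the same way, since a point of \<open>\<Sigma>\<^sup>*\<^sub>X\<^sub>\<union>\<^sub>Y\<close> appearing in a strict
  convex combination landing in \<open>\<Sigma>\<^sup>*\<^sub>X\<close> has a Gram matrix killing the linear forms of \<open>X\<close>.\<close>

section \<open>Monomials and forms in coordinates\<close>

lemma lookup_minus_monom:
  "Poly_Mapping.lookup ((a::monom) - b) k = Poly_Mapping.lookup a k - Poly_Mapping.lookup b k"
  by transfer simp

lemma lookup_scaleR: "Poly_Mapping.lookup (c *\<^sub>R (p::rpoly)) m = c * Poly_Mapping.lookup p m"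
  by (simp add: scaleR_poly_mapping_def)

lemma keys_scaleR: "Poly_Mapping.keys (c *\<^sub>R (p::rpoly)) \<subseteq> Poly_Mapping.keys p"
  by (auto simp: in_keys_iff lookup_scaleR)

lemma scaleR_conv_mult_single: "c *\<^sub>R (p::rpoly) = Poly_Mapping.single 0 c * p"
  by (rule poly_mapping_eqI)
    (simp add: mult_map_scale_conv_mult[symmetric] lookup_scaleR map.rep_eq when_def)

lemma mult_scaleR_left_rpoly: "(c *\<^sub>R (p::rpoly)) * q = c *\<^sub>R (p * q)"
  by (simp add: scaleR_conv_mult_single mult.assoc)

lemma mult_scaleR_right_rpoly: "(p::rpoly) * (c *\<^sub>R q) = c *\<^sub>R (p * q)"
  by (simp add: scaleR_conv_mult_single mult.left_commute)

lemma single_eq_single_iff: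
  "Poly_Mapping.single i (k::nat) = Poly_Mapping.single j k \<longleftrightarrow> i = j \<or> k = 0"
  by (metis lookup_single_eq lookup_single_not_eq single_zero)

lemma single_scaleR: "c *\<^sub>R Poly_Mapping.single (m::monom) (1::real) = Poly_Mapping.single m c"
  by (rule poly_mapping_eqI) (simp add: lookup_scaleR lookup_single when_def)

lemma poly_mapping_sum_single:
  assumes "finite F" "Poly_Mapping.keys (p::'a \<Rightarrow>\<^sub>0 'b::comm_monoid_add) \<subseteq> F"
  shows "p = (\<Sum>m\<in>F. Poly_Mapping.single m (Poly_Mapping.lookup p m))"
proof (rule poly_mapping_eqI)
  fix k
  have "Poly_Mapping.lookup (\<Sum>m\<in>F. Poly_Mapping.single m (Poly_Mapping.lookup p m)) k
      = (\<Sum>m\<in>F. Poly_Mapping.lookup p m when m = k)"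
    by (simp add: lookup_sum lookup_single)
  also have "\<dots> = Poly_Mapping.lookup p k"
    using assms by (cases "k \<in> F") (auto simp: when_def sum.delta in_keys_iff)
  finally show
    "Poly_Mapping.lookup p k = Poly_Mapping.lookup (\<Sum>m\<in>F. Poly_Mapping.single m (Poly_Mapping.lookup p m)) k"
    by simp
qed

lemma mdeg_eq_sum:
  assumes "finite F" "Poly_Mapping.keys m \<subseteq> F"
  shows "mdeg m = (\<Sum>i\<in>F. Poly_Mapping.lookup m i)"
  unfolding mdeg_def by (rule sum.mono_neutral_left) (use assms in \<open>auto simp: in_keys_iff\<close>)

lemma keys_add_monom:
  "Poly_Mapping.keys ((a::monom) + b) = Poly_Mapping.keys a \<union> Poly_Mapping.keys b"
  by (auto simp: in_keys_iff lookup_add)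

lemma mdeg_add: "mdeg ((a::monom) + b) = mdeg a + mdeg b"
proof -
  let ?F = "Poly_Mapping.keys a \<union> Poly_Mapping.keys b"
  have "mdeg (a + b) = (\<Sum>i\<in>?F. Poly_Mapping.lookup (a + b) i)"
    by (rule mdeg_eq_sum) (auto simp: keys_add_monom)
  also have "\<dots> = (\<Sum>i\<in>?F. Poly_Mapping.lookup a i) + (\<Sum>i\<in>?F. Poly_Mapping.lookup b i)"
    by (simp add: lookup_add sum.distrib)
  also have "\<dots> = mdeg a + mdeg b"
    by (subst (1 2) mdeg_eq_sum[where F = ?F]) auto
  finally show ?thesis .
qed

lemma mdeg_single: "mdeg (Poly_Mapping.single i k) = k"
  unfolding mdeg_def by (cases "k = 0") auto

lemma mdeg_eq_0: "mdeg m = 0 \<Longrightarrow> m = 0"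
  unfolding mdeg_def
  by (metis (no_types, lifting) finite_keys in_keys_iff keys_eq_empty sum_eq_0_iff ex_in_conv)

lemma mdeg_SucE:
  assumes "mdeg m = Suc d"
  obtains i m' where "i \<in> Poly_Mapping.keys m" "m = Poly_Mapping.single i 1 + m'" "mdeg m' = d"
    "Poly_Mapping.keys m' \<subseteq> Poly_Mapping.keys m"
proof -
  have "m \<noteq> 0" using assms by (auto simp: mdeg_def)
  then obtain i where i: "i \<in> Poly_Mapping.keys m" by (metis keys_eq_empty ex_in_conv)
  define m' where "m' = m - Poly_Mapping.single i 1"
  have lm: "Poly_Mapping.lookup m' k = Poly_Mapping.lookup m k - (1 when i = k)" for k
    unfolding m'_def by (simp add: lookup_minus_monom lookup_single)
  have eq: "m = Poly_Mapping.single i 1 + m'"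
    by (rule poly_mapping_eqI)
      (use i in \<open>auto simp: lookup_add lm lookup_single when_def in_keys_iff\<close>)
  have "mdeg m = 1 + mdeg m'" by (subst eq) (simp add: mdeg_add mdeg_single)
  then have "mdeg m' = d" using assms by simp
  moreover have "Poly_Mapping.keys m' \<subseteq> Poly_Mapping.keys m" by (auto simp: in_keys_iff lm)
  ultimately show ?thesis using i eq that by blast
qed

definition var :: "nat \<Rightarrow> rpoly" where
  "var i = Poly_Mapping.single (Poly_Mapping.single i 1) 1"

definition quad_monom :: "nat \<Rightarrow> nat \<Rightarrow> monom" where
  "quad_monom i j = Poly_Mapping.single i 1 + Poly_Mapping.single j 1"

definition quad_monoms :: "nat \<Rightarrow> monom set" where
  "quad_monoms n = {m. Poly_Mapping.keys m \<subseteq> {..n} \<and> mdeg m = 2}"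

definition lin_coeff :: "rpoly \<Rightarrow> nat \<Rightarrow> real" where
  "lin_coeff f i = Poly_Mapping.lookup f (Poly_Mapping.single i 1)"

text \<open>Off the diagonal, the coefficient of \<open>x\<^sub>i x\<^sub>j\<close> is split equally between the entries
  \<open>(i, j)\<close> and \<open>(j, i)\<close>.\<close>
definition quad_coeff :: "rpoly \<Rightarrow> nat \<Rightarrow> nat \<Rightarrow> real" where
  "quad_coeff q i j =
     (if i = j then Poly_Mapping.lookup q (quad_monom i i)
      else Poly_Mapping.lookup q (quad_monom i j) / 2)"

definition lin_vecs :: "nat \<Rightarrow> rpoly set \<Rightarrow> (nat \<Rightarrow> real) set" where
  "lin_vecs n I = lin_coeff ` (I \<inter> homog n 1)"

lemma lin_vecs_Un: "lin_vecs n (I \<union> J) = lin_vecs n I \<union> lin_vecs n J"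
  by (auto simp: lin_vecs_def)

lemma quad_monom_comm: "quad_monom i j = quad_monom j i"
  by (simp add: quad_monom_def add.commute)

lemma lookup_quad_monom: "Poly_Mapping.lookup (quad_monom i j) k = (1 when k = i) + (1 when k = j)"
  by (auto simp: quad_monom_def lookup_add lookup_single when_def)

lemma quad_monom_eq_iff:
  "quad_monom i j = quad_monom a b \<longleftrightarrow> (i = a \<and> j = b) \<or> (i = b \<and> j = a)"
proof
  assume "quad_monom i j = quad_monom a b"
  then have e: "\<And>k. Poly_Mapping.lookup (quad_monom i j) k = Poly_Mapping.lookup (quad_monom a b) k"
    by simp
  from e[of i] have "i = a \<or> i = b" by (auto simp: lookup_quad_monom when_def split: if_splits)
  then show "(i = a \<and> j = b) \<or> (i = b \<and> j = a)"
    using e[of j] e[of a] e[of b] by (auto simp: lookup_quad_monom when_def split: if_splits)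
qed (auto simp: quad_monom_comm)

lemma keys_quad_monom: "Poly_Mapping.keys (quad_monom i j) = {i, j}"
  by (auto simp: in_keys_iff lookup_quad_monom when_def split: if_splits)

lemma mdeg_quad_monom: "mdeg (quad_monom i j) = 2"
  by (simp add: quad_monom_def mdeg_add mdeg_single)

lemma quad_monom_in_quad_monoms: "i \<le> n \<Longrightarrow> j \<le> n \<Longrightarrow> quad_monom i j \<in> quad_monoms n"
  by (auto simp: quad_monoms_def keys_quad_monom mdeg_quad_monom)

lemma mdeg_1_imp_single:
  assumes "Poly_Mapping.keys m \<subseteq> {..n}" "mdeg m = 1"
  shows "\<exists>i\<le>n. m = Poly_Mapping.single i 1"
proof -
  obtain i m' where "i \<in> Poly_Mapping.keys m" "m = Poly_Mapping.single i 1 + m'" "mdeg m' = 0"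
    by (rule mdeg_SucE[of m 0]) (use assms in auto)
  then show ?thesis using assms mdeg_eq_0 by auto
qed

lemma quad_monoms_eq: "quad_monoms n = (\<lambda>(i, j). quad_monom i j) ` ({..n} \<times> {..n})"
proof (intro equalityI subsetI)
  fix m assume m: "m \<in> quad_monoms n"
  obtain i m' where 1: "i \<in> Poly_Mapping.keys m" "m = Poly_Mapping.single i 1 + m'" "mdeg m' = 1"
    "Poly_Mapping.keys m' \<subseteq> Poly_Mapping.keys m"
    by (rule mdeg_SucE[of m 1]) (use m in \<open>auto simp: quad_monoms_def numeral_2_eq_2\<close>)
  obtain j where "j \<le> n" "m' = Poly_Mapping.single j 1"
    using mdeg_1_imp_single[of m' n] 1 m by (auto simp: quad_monoms_def)
  then show "m \<in> (\<lambda>(i, j). quad_monom i j) ` ({..n} \<times> {..n})"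
    using 1 m by (intro rev_image_eqI[of "(i, j)"]) (auto simp: quad_monom_def quad_monoms_def)
qed (auto intro: quad_monom_in_quad_monoms)

lemma finite_quad_monoms: "finite (quad_monoms n)"
  by (simp add: quad_monoms_eq)

lemma homog_2_keys: "q \<in> homog n 2 \<Longrightarrow> Poly_Mapping.keys q \<subseteq> quad_monoms n"
  by (auto simp: homog_def quad_monoms_def)

lemma homog_zero: "0 \<in> homog n d"
  by (simp add: homog_def)

lemma homog_add: "p \<in> homog n d \<Longrightarrow> q \<in> homog n d \<Longrightarrow> p + q \<in> homog n d"
  unfolding homog_def using keys_add[of p q] by blast

lemma homog_scaleR: "p \<in> homog n d \<Longrightarrow> c *\<^sub>R p \<in> homog n d"
  unfolding homog_def using keys_scaleR[of c p] by blast

lemma homog_diff: "p \<in> homog n d \<Longrightarrow> q \<in> homog n d \<Longrightarrow> p - q \<in> homog n d"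
  using homog_add[of p n d "- q"] by (simp add: homog_def)

lemma homog_sum: "(\<And>x. x \<in> A \<Longrightarrow> f x \<in> homog n d) \<Longrightarrow> sum f A \<in> homog n d"
  by (induction A rule: infinite_finite_induct) (auto simp: homog_zero homog_add)

lemma homog_single: "Poly_Mapping.keys m \<subseteq> {..n} \<Longrightarrow> mdeg m = d \<Longrightarrow> Poly_Mapping.single m c \<in> homog n d"
  by (simp add: homog_def)

lemma homog_subset_Rn: "homog n d \<subseteq> Rn n"
  by (auto simp: homog_def Rn_def)

lemma single_quad_monom_homog: "i \<le> n \<Longrightarrow> j \<le> n \<Longrightarrow> Poly_Mapping.single (quad_monom i j) c \<in> homog n 2"
  by (rule homog_single) (auto simp: keys_quad_monom mdeg_quad_monom)

lemma var_homog: "i \<le> n \<Longrightarrow> var i \<in> homog n 1"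
  unfolding var_def by (rule homog_single) (auto simp: mdeg_single)

lemma var_mult_var: "var i * var j = Poly_Mapping.single (quad_monom i j) 1"
  by (simp add: var_def quad_monom_def mult_single)

lemma linear_form_expand:
  assumes "f \<in> homog n 1"
  shows "f = (\<Sum>i\<le>n. lin_coeff f i *\<^sub>R var i)"
proof -
  have sub: "Poly_Mapping.keys f \<subseteq> (\<lambda>i. Poly_Mapping.single i 1) ` {..n}"
    using assms mdeg_1_imp_single unfolding homog_def by blast
  have inj: "inj_on (\<lambda>i. Poly_Mapping.single i (1::nat)) {..n}"
    by (auto simp: inj_on_def single_eq_single_iff)
  have "f = (\<Sum>m\<in>(\<lambda>i. Poly_Mapping.single i 1) ` {..n}.
              Poly_Mapping.single m (Poly_Mapping.lookup f m))"
    by (rule poly_mapping_sum_single[OF _ sub]) simp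
  also have "\<dots> = (\<Sum>i\<le>n. Poly_Mapping.single (Poly_Mapping.single i 1) (lin_coeff f i))"
    by (simp only: sum.reindex[OF inj] comp_def lin_coeff_def)
  also have "\<dots> = (\<Sum>i\<le>n. lin_coeff f i *\<^sub>R var i)"
    by (simp add: var_def single_scaleR)
  finally show ?thesis .
qed

lemma mult_linear_forms_expand:
  assumes "f \<in> homog n 1" "g \<in> homog n 1"
  shows "f * g =
    (\<Sum>i\<le>n. \<Sum>j\<le>n. (lin_coeff f i * lin_coeff g j) *\<^sub>R Poly_Mapping.single (quad_monom i j) 1)"
proof -
  have "f * g = (\<Sum>i\<le>n. lin_coeff f i *\<^sub>R var i) * (\<Sum>j\<le>n. lin_coeff g j *\<^sub>R var j)"
    using linear_form_expand assms by metis
  also have "\<dots> = (\<Sum>i\<le>n. \<Sum>j\<le>n. (lin_coeff f i *\<^sub>R var i) * (lin_coeff g j *\<^sub>R var j))"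
    by (simp add: sum_distrib_left sum_distrib_right, subst sum.swap, rule refl)
  also have "\<dots> =
      (\<Sum>i\<le>n. \<Sum>j\<le>n. (lin_coeff f i * lin_coeff g j) *\<^sub>R Poly_Mapping.single (quad_monom i j) 1)"
    by (simp add: mult_scaleR_left_rpoly mult_scaleR_right_rpoly var_mult_var mult.commute)
  finally show ?thesis .
qed

lemma mult_linear_forms_homog: "f \<in> homog n 1 \<Longrightarrow> g \<in> homog n 1 \<Longrightarrow> f * g \<in> homog n 2"
  by (subst mult_linear_forms_expand[of f n g])
    (auto intro!: homog_sum homog_scaleR single_quad_monom_homog)

lemma sum_sum_symmetric_pair:
  fixes f :: "nat \<Rightarrow> nat \<Rightarrow> real"
  assumes "a \<in> A" "b \<in> A" "finite A"
  shows "(\<Sum>i\<in>A. \<Sum>j\<in>A. if (i = a \<and> j = b) \<or> (i = b \<and> j = a) then f i j else 0)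
         = (if a = b then f a a else f a b + f b a)"
proof -
  have "(\<Sum>j\<in>A. if (i = a \<and> j = b) \<or> (i = b \<and> j = a) then f i j else 0)
     = (if i = a then f a b else 0) + (if i = b \<and> a \<noteq> b then f b a else 0)" if "i \<in> A" for i
    using assms by (cases "i = a"; cases "i = b") (auto simp: sum.delta)
  then show ?thesis
    using assms by (simp add: sum.distrib sum.delta)
qed

lemma quadratic_form_expand:
  assumes "q \<in> homog n 2"
  shows "q = (\<Sum>i\<le>n. \<Sum>j\<le>n. quad_coeff q i j *\<^sub>R Poly_Mapping.single (quad_monom i j) 1)"
proof (rule poly_mapping_eqI)
  fix k
  have expand:
    "Poly_Mapping.lookup (\<Sum>i\<le>n. \<Sum>j\<le>n. quad_coeff q i j *\<^sub>R Poly_Mapping.single (quad_monom i j) 1) k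
      = (\<Sum>i\<le>n. \<Sum>j\<le>n. if quad_monom i j = k then quad_coeff q i j else 0)"
    by (simp add: lookup_sum single_scaleR lookup_single when_def)
  show "Poly_Mapping.lookup q k =
    Poly_Mapping.lookup (\<Sum>i\<le>n. \<Sum>j\<le>n. quad_coeff q i j *\<^sub>R Poly_Mapping.single (quad_monom i j) 1) k"
  proof (cases "k \<in> quad_monoms n")
    case True
    then obtain a b where ab: "a \<le> n" "b \<le> n" "k = quad_monom a b"
      by (auto simp: quad_monoms_eq)
    have "(\<Sum>i\<le>n. \<Sum>j\<le>n. if quad_monom i j = k then quad_coeff q i j else 0)
        = (if a = b then quad_coeff q a a else quad_coeff q a b + quad_coeff q b a)"
      using ab by (simp add: quad_monom_eq_iff sum_sum_symmetric_pair)
    also have "\<dots> = Poly_Mapping.lookup q k"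
      using ab by (auto simp: quad_coeff_def quad_monom_comm)
    finally show ?thesis using expand by simp
  next
    case False
    then have "k \<notin> Poly_Mapping.keys q" using homog_2_keys[OF assms] by blast
    moreover have "(\<Sum>i\<le>n. \<Sum>j\<le>n. if quad_monom i j = k then quad_coeff q i j else 0) = 0"
      using False by (intro sum.neutral ballI) (auto intro: quad_monom_in_quad_monoms)
    ultimately show ?thesis using expand by (simp add: in_keys_iff)
  qed
qed

lemma lin_coeff_var: "lin_coeff (var j) k = (if j = k then 1 else 0)"
  by (simp add: lin_coeff_def var_def lookup_single when_def single_eq_single_iff)

lemma lin_coeff_scaleR: "lin_coeff (c *\<^sub>R f) k = c * lin_coeff f k"
  by (simp add: lin_coeff_def lookup_scaleR)

lemma lin_coeff_sum: "lin_coeff (sum f A) k = (\<Sum>x\<in>A. lin_coeff (f x) k)"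
  by (simp add: lin_coeff_def lookup_sum)

lemma lin_coeff_sum_var: "k \<le> n \<Longrightarrow> lin_coeff (\<Sum>i\<le>n. c i *\<^sub>R var i) k = c k"
  by (simp add: lin_coeff_sum lin_coeff_scaleR lin_coeff_var if_distrib[where f = "\<lambda>x. _ * x"]
      cong: if_cong)

lemma sum_var_homog: "(\<Sum>i\<le>n. c i *\<^sub>R var i) \<in> homog n 1"
  by (intro homog_sum homog_scaleR var_homog) simp

section \<open>Evaluation at real points\<close>

definition eval_monom :: "monom \<Rightarrow> (nat \<Rightarrow> real) \<Rightarrow> real" where
  "eval_monom m z = (\<Prod>i\<in>Poly_Mapping.keys m. z i ^ Poly_Mapping.lookup m i)"

definition eval_poly :: "rpoly \<Rightarrow> (nat \<Rightarrow> real) \<Rightarrow> real" where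
  "eval_poly p z = (\<Sum>m\<in>Poly_Mapping.keys p. Poly_Mapping.lookup p m * eval_monom m z)"

lemma eval_monom_eq_prod:
  assumes "finite F" "Poly_Mapping.keys m \<subseteq> F"
  shows "eval_monom m z = (\<Prod>i\<in>F. z i ^ Poly_Mapping.lookup m i)"
  unfolding eval_monom_def by (rule prod.mono_neutral_left) (use assms in \<open>auto simp: in_keys_iff\<close>)

lemma eval_monom_add: "eval_monom (a + b) z = eval_monom a z * eval_monom b z"
proof -
  let ?F = "Poly_Mapping.keys a \<union> Poly_Mapping.keys b"
  have "eval_monom (a + b) z = (\<Prod>i\<in>?F. z i ^ Poly_Mapping.lookup (a + b) i)"
    by (rule eval_monom_eq_prod) (auto simp: keys_add_monom)
  also have "\<dots> = (\<Prod>i\<in>?F. z i ^ Poly_Mapping.lookup a i) * (\<Prod>i\<in>?F. z i ^ Poly_Mapping.lookup b i)"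
    by (simp add: lookup_add power_add prod.distrib)
  also have "\<dots> = eval_monom a z * eval_monom b z"
    by (subst (1 2) eval_monom_eq_prod[where F = ?F]) auto
  finally show ?thesis .
qed

lemma eval_monom_single: "eval_monom (Poly_Mapping.single i k) z = z i ^ k"
  unfolding eval_monom_def by (cases "k = 0") auto

lemma eval_poly_eq_sum:
  assumes "finite F" "Poly_Mapping.keys p \<subseteq> F"
  shows "eval_poly p z = (\<Sum>m\<in>F. Poly_Mapping.lookup p m * eval_monom m z)"
  unfolding eval_poly_def by (rule sum.mono_neutral_left) (use assms in \<open>auto simp: in_keys_iff\<close>)

lemma eval_poly_add: "eval_poly (p + q) z = eval_poly p z + eval_poly q z"
proof -
  let ?F = "Poly_Mapping.keys p \<union> Poly_Mapping.keys q"
  have "eval_poly (p + q) z = (\<Sum>m\<in>?F. Poly_Mapping.lookup (p + q) m * eval_monom m z)"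
    by (rule eval_poly_eq_sum) (use keys_add[of p q] in auto)
  also have "\<dots> = (\<Sum>m\<in>?F. Poly_Mapping.lookup p m * eval_monom m z)
                 + (\<Sum>m\<in>?F. Poly_Mapping.lookup q m * eval_monom m z)"
    by (simp add: lookup_add distrib_right sum.distrib)
  also have "\<dots> = eval_poly p z + eval_poly q z"
    by (subst (1 2) eval_poly_eq_sum[where F = ?F]) auto
  finally show ?thesis .
qed

lemma eval_poly_scaleR: "eval_poly (c *\<^sub>R p) z = c * eval_poly p z"
proof -
  have "eval_poly (c *\<^sub>R p) z =
      (\<Sum>m\<in>Poly_Mapping.keys p. Poly_Mapping.lookup (c *\<^sub>R p) m * eval_monom m z)"
    by (rule eval_poly_eq_sum) (auto simp: keys_scaleR)
  then show ?thesis by (simp add: eval_poly_def lookup_scaleR sum_distrib_left mult.assoc)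
qed

lemma linear_eval_poly: "linear (\<lambda>p. eval_poly p z)"
  by (rule linearI) (simp_all add: eval_poly_add eval_poly_scaleR)

lemma eval_poly_sum: "eval_poly (sum f A) z = (\<Sum>x\<in>A. eval_poly (f x) z)"
  using linear_sum[OF linear_eval_poly] by blast

lemma eval_poly_single: "eval_poly (Poly_Mapping.single m c) z = c * eval_monom m z"
  by (simp add: eval_poly_def)

lemma eval_poly_zero: "eval_poly 0 z = 0"
  by (simp add: eval_poly_def)

lemma eval_poly_mult: "eval_poly (p * q) z = eval_poly p z * eval_poly q z"
proof -
  let ?p = "\<lambda>a. Poly_Mapping.lookup p a" and ?q = "\<lambda>b. Poly_Mapping.lookup q b"
  have "p * q = (\<Sum>a\<in>Poly_Mapping.keys p. Poly_Mapping.single a (?p a))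
              * (\<Sum>b\<in>Poly_Mapping.keys q. Poly_Mapping.single b (?q b))"
    using poly_mapping_sum_single[of "Poly_Mapping.keys p" p]
      poly_mapping_sum_single[of "Poly_Mapping.keys q" q] by simp
  also have "\<dots> =
      (\<Sum>a\<in>Poly_Mapping.keys p. \<Sum>b\<in>Poly_Mapping.keys q. Poly_Mapping.single (a + b) (?p a * ?q b))"
    by (simp add: sum_distrib_left sum_distrib_right mult_single, subst sum.swap, rule refl)
  finally have "eval_poly (p * q) z
      = (\<Sum>a\<in>Poly_Mapping.keys p. \<Sum>b\<in>Poly_Mapping.keys q.
           ?p a * ?q b * (eval_monom a z * eval_monom b z))"
    by (simp add: eval_poly_sum eval_poly_single eval_monom_add)
  also have "\<dots> = (\<Sum>a\<in>Poly_Mapping.keys p. (?p a * eval_monom a z)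
                       * (\<Sum>b\<in>Poly_Mapping.keys q. ?q b * eval_monom b z))"
    by (simp add: sum_distrib_left mult_ac)
  also have "\<dots> = eval_poly p z * eval_poly q z"
    by (simp add: eval_poly_def sum_distrib_right)
  finally show ?thesis .
qed

lemma eval_linear_form:
  assumes "f \<in> homog n 1"
  shows "eval_poly f z = (\<Sum>i\<le>n. lin_coeff f i * z i)"
  by (subst linear_form_expand[OF assms])
    (simp add: eval_poly_sum var_def single_scaleR eval_poly_single eval_monom_single)

lemma eval_quadratic_form:
  assumes "q \<in> homog n 2"
  shows "eval_poly q z = (\<Sum>i\<le>n. \<Sum>j\<le>n. quad_coeff q i j * (z i * z j))"
  by (subst quadratic_form_expand[OF assms])
    (simp add: eval_poly_sum single_scaleR eval_poly_single quad_monom_def eval_monom_add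
      eval_monom_single)


section \<open>Symmetric matrices\<close>

text \<open>Matrices and vectors are indexed by \<open>nat\<close>; only the entries with indices in \<open>{..n}\<close> matter.\<close>

type_synonym rvec = "nat \<Rightarrow> real"
type_synonym rmat = "nat \<Rightarrow> nat \<Rightarrow> real"

definition dotp :: "nat \<Rightarrow> rvec \<Rightarrow> rvec \<Rightarrow> real" where
  "dotp n u v = (\<Sum>i\<le>n. u i * v i)"

definition bilin :: "nat \<Rightarrow> rmat \<Rightarrow> rvec \<Rightarrow> rvec \<Rightarrow> real" where
  "bilin n G c d = (\<Sum>i\<le>n. \<Sum>j\<le>n. c i * G i j * d j)"

definition symm_mat :: "nat \<Rightarrow> rmat \<Rightarrow> bool" where
  "symm_mat n G \<longleftrightarrow> (\<forall>i\<le>n. \<forall>j\<le>n. G i j = G j i)"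

definition psd :: "nat \<Rightarrow> rmat \<Rightarrow> bool" where
  "psd n G \<longleftrightarrow> (\<forall>c. 0 \<le> bilin n G c c)"

definition in_ker :: "nat \<Rightarrow> rmat \<Rightarrow> rvec \<Rightarrow> bool" where
  "in_ker n G s \<longleftrightarrow> (\<forall>j\<le>n. dotp n s (\<lambda>i. G i j) = 0)"

definition trace_prod :: "nat \<Rightarrow> rmat \<Rightarrow> rmat \<Rightarrow> real" where
  "trace_prod n G Q = (\<Sum>i\<le>n. \<Sum>j\<le>n. G i j * Q i j)"

definition rank_one :: "real \<Rightarrow> rvec \<Rightarrow> rvec \<Rightarrow> rmat" where
  "rank_one c u v = (\<lambda>i j. c * (u i * v j))"

definition orth :: "nat \<Rightarrow> rvec set \<Rightarrow> rvec set" where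
  "orth n S = {z. \<forall>s\<in>S. dotp n s z = 0}"

lemma bilin_add_left: "bilin n G (\<lambda>i. a i + b i) d = bilin n G a d + bilin n G b d"
  by (simp add: bilin_def algebra_simps sum.distrib)

lemma bilin_add_right: "bilin n G d (\<lambda>i. a i + b i) = bilin n G d a + bilin n G d b"
  by (simp add: bilin_def algebra_simps sum.distrib)

lemma bilin_scale_left: "bilin n G (\<lambda>i. t * a i) d = t * bilin n G a d"
  by (simp add: bilin_def algebra_simps sum_distrib_left)

lemma bilin_scale_right: "bilin n G d (\<lambda>i. t * a i) = t * bilin n G d a"
  by (simp add: bilin_def algebra_simps sum_distrib_left)

lemma bilin_commute: "symm_mat n G \<Longrightarrow> bilin n G a b = bilin n G b a"
  unfolding bilin_def symm_mat_def by (subst sum.swap) (auto intro!: sum.cong simp: mult_ac)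

lemma bilin_add_mat: "bilin n (G + H) c d = bilin n G c d + bilin n H c d"
  by (simp add: bilin_def algebra_simps sum.distrib)

lemma bilin_diff_mat: "bilin n (G - H) c d = bilin n G c d - bilin n H c d"
  by (simp add: bilin_def algebra_simps sum_subtractf)

lemma bilin_rank_one: "bilin n (rank_one r u v) c d = r * dotp n c u * dotp n d v"
  by (simp add: bilin_def rank_one_def dotp_def sum_distrib_left sum_distrib_right mult_ac)

lemma dotp_column: "dotp n c (\<lambda>j. dotp n b (\<lambda>i. L i j)) = bilin n L b c"
  unfolding bilin_def dotp_def by (simp add: sum_distrib_left mult_ac, subst sum.swap, rule refl)

lemma in_ker_iff_bilin: "in_ker n G s \<longleftrightarrow> (\<forall>d. bilin n G s d = 0)"
proof
  assume "in_ker n G s"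
  then show "\<forall>d. bilin n G s d = 0"
    using dotp_column[of n _ s G] by (simp add: in_ker_def dotp_def)
next
  assume *: "\<forall>d. bilin n G s d = 0"
  show "in_ker n G s"
    unfolding in_ker_def
  proof (intro allI impI)
    fix j assume "j \<le> n"
    then have "bilin n G s (\<lambda>k. if k = j then 1 else 0) = dotp n s (\<lambda>i. G i j)"
      by (simp add: bilin_def dotp_def if_distrib[where f = "\<lambda>x. _ * x"] sum.delta cong: if_cong)
    then show "dotp n s (\<lambda>i. G i j) = 0" using * by simp
  qed
qed

lemma in_ker_add: "in_ker n G s \<Longrightarrow> in_ker n H s \<Longrightarrow> in_ker n (G + H) s"
  by (simp add: in_ker_def dotp_def algebra_simps sum.distrib)

lemma in_ker_diff: "in_ker n G s \<Longrightarrow> in_ker n H s \<Longrightarrow> in_ker n (G - H) s"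
  by (simp add: in_ker_def dotp_def algebra_simps sum_subtractf)

lemma in_ker_swap_diff: "in_ker n (G - H) s \<Longrightarrow> in_ker n (H - G) s"
  by (simp add: in_ker_def dotp_def algebra_simps sum_subtractf)

lemma in_ker_rank_one: "dotp n s u = 0 \<Longrightarrow> in_ker n (rank_one c u v) s"
  by (simp add: in_ker_iff_bilin bilin_rank_one)

lemma in_ker_cong: "(\<And>i j. i \<le> n \<Longrightarrow> j \<le> n \<Longrightarrow> G i j = H i j) \<Longrightarrow> in_ker n G s \<longleftrightarrow> in_ker n H s"
  by (simp add: in_ker_def dotp_def)

lemma psd_cong: "(\<And>i j. i \<le> n \<Longrightarrow> j \<le> n \<Longrightarrow> G i j = H i j) \<Longrightarrow> psd n G \<longleftrightarrow> psd n H"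
  by (simp add: psd_def bilin_def)

lemma psd_add: "psd n G \<Longrightarrow> psd n H \<Longrightarrow> psd n (G + H)"
  by (simp add: psd_def bilin_add_mat)

lemma psd_rank_one: "r \<ge> 0 \<Longrightarrow> psd n (rank_one r l l)"
  by (simp add: psd_def bilin_rank_one mult.assoc)

lemma discriminant_le_if_nonneg:
  fixes a b c :: real
  assumes nonneg: "\<And>t. 0 \<le> c + 2 * t * b + t\<^sup>2 * a" and "a \<ge> 0"
  shows "b\<^sup>2 \<le> a * c"
proof (cases "a = 0")
  case True
  have "b = 0"
  proof (rule ccontr)
    assume "b \<noteq> 0"
    then show False using nonneg[of "- (c + 1) / (2 * b)"] True by (simp add: field_simps)
  qed
  then show ?thesis using True by simp
next
  case False
  then have "a > 0" using assms(2) by simp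
  moreover have "0 \<le> c + 2 * (- b / a) * b + (- b / a)\<^sup>2 * a" by (rule nonneg)
  ultimately show ?thesis by (simp add: field_simps power2_eq_square)
qed

lemma psd_cauchy_schwarz:
  assumes "psd n G" "symm_mat n G"
  shows "(bilin n G b v)\<^sup>2 \<le> bilin n G b b * bilin n G v v"
proof (rule discriminant_le_if_nonneg)
  fix t
  have "0 \<le> bilin n G (\<lambda>i. v i + t * b i) (\<lambda>i. v i + t * b i)"
    using assms(1) by (simp add: psd_def)
  also have "\<dots> = bilin n G v v + 2 * t * bilin n G b v + t\<^sup>2 * bilin n G b b"
    using bilin_commute[OF assms(2), of v b]
    by (simp add: bilin_add_left bilin_add_right bilin_scale_left bilin_scale_right
        power2_eq_square algebra_simps)
  finally show "0 \<le> bilin n G v v + 2 * t * bilin n G b v + t\<^sup>2 * bilin n G b b" .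
qed (use assms(1) in \<open>simp add: psd_def\<close>)

lemma psd_in_ker:
  assumes "psd n G" "symm_mat n G" "bilin n G s s = 0"
  shows "in_ker n G s"
proof -
  have "(bilin n G s d)\<^sup>2 \<le> 0" for d
    using psd_cauchy_schwarz[OF assms(1,2), of s d] assms(3) by simp
  then show ?thesis by (simp add: in_ker_iff_bilin)
qed

lemma in_ker_of_psd_combination:
  assumes "psd n A" "symm_mat n A" "psd n C" "t > 0" "s \<ge> 0"
    and "in_ker n (\<lambda>i j. t * A i j + s * C i j) v"
  shows "in_ker n A v"
proof (rule psd_in_ker[OF assms(1,2)])
  have "bilin n (\<lambda>i j. t * A i j + s * C i j) v v = t * bilin n A v v + s * bilin n C v v"
    by (simp add: bilin_def algebra_simps sum.distrib sum_distrib_left)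
  moreover have "bilin n (\<lambda>i j. t * A i j + s * C i j) v v = 0"
    using assms(6) by (simp add: in_ker_iff_bilin)
  moreover have "bilin n A v v \<ge> 0" "bilin n C v v \<ge> 0"
    using assms(1,3) by (simp_all add: psd_def)
  ultimately show "bilin n A v v = 0"
    using assms(4,5) by (smt (verit) mult_nonneg_nonneg mult_pos_pos)
qed

text \<open>One step of symmetric Gaussian elimination, i.e.\ a Schur complement; positivity of the result
  is the Cauchy-Schwarz inequality for \<open>L\<close>.\<close>

lemma psd_deflate:
  assumes L: "symm_mat n L" "psd n L" and pos: "bilin n L b b > 0"
    and l: "l = (\<lambda>j. dotp n b (\<lambda>i. L i j))"
    and L': "L' = L - rank_one (1 / bilin n L b b) l l"
  shows "\<And>c d. bilin n L' c d = bilin n L c d - bilin n L b c * bilin n L b d / bilin n L b b"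
    and "symm_mat n L'" and "psd n L'" and "in_ker n L' b"
    and "\<And>k. in_ker n L k \<Longrightarrow> in_ker n L' k"
proof -
  let ?\<beta> = "bilin n L b b"
  show bilin': "bilin n L' c d = bilin n L c d - bilin n L b c * bilin n L b d / ?\<beta>" for c d
    by (simp add: L' bilin_diff_mat bilin_rank_one l dotp_column)
  show "symm_mat n L'"
    using L(1) by (auto simp: symm_mat_def L' rank_one_def mult_ac)
  show "psd n L'"
    unfolding psd_def
  proof
    fix c
    have "(bilin n L b c)\<^sup>2 \<le> ?\<beta> * bilin n L c c"
      by (rule psd_cauchy_schwarz[OF L(2,1)])
    then show "0 \<le> bilin n L' c c"
      using pos by (simp add: bilin' field_simps power2_eq_square)
  qed
  show "in_ker n L' b"
    using pos by (simp add: in_ker_iff_bilin bilin')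
  show "in_ker n L' k" if "in_ker n L k" for k
    using that bilin_commute[OF L(1), of b k] by (simp add: in_ker_iff_bilin bilin')
qed

lemma psd_schur_split:
  assumes "symm_mat n L" "psd n L" "\<forall>a\<in>A. \<forall>b\<in>set bs. bilin n L b a = 0"
  shows "\<exists>P. symm_mat n P \<and> psd n P \<and> psd n (L - P) \<and> (\<forall>b\<in>set bs. in_ker n P b)
           \<and> (\<forall>a\<in>A. in_ker n (L - P) a) \<and> (\<forall>k. in_ker n L k \<longrightarrow> in_ker n P k)"
  using assms
proof (induction bs arbitrary: L)
  case Nil
  show ?case
    using Nil.prems by (intro exI[of _ L]) (auto simp: psd_def bilin_def in_ker_def dotp_def)
next
  case (Cons b bs L)
  consider "bilin n L b b = 0" | "bilin n L b b > 0"
    using Cons.prems(2) by (metis psd_def order_le_less)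
  then show ?case
  proof cases
    case 1
    then have "in_ker n L b" using psd_in_ker Cons.prems(1,2) by blast
    with Cons.IH[OF Cons.prems(1,2)] Cons.prems(3) show ?thesis by auto
  next
    case 2
    define l where "l = (\<lambda>j. dotp n b (\<lambda>i. L i j))"
    define R where "R = rank_one (1 / bilin n L b b) l l"
    define L' where "L' = L - R"
    note deflate = psd_deflate[OF Cons.prems(1,2) 2 l_def L'_def[unfolded R_def]]
    have "\<forall>a\<in>A. \<forall>b'\<in>set bs. bilin n L' b' a = 0"
      using Cons.prems(3) by (simp add: deflate(1))
    then obtain P where P: "symm_mat n P" "psd n P" "psd n (L' - P)" "\<forall>b\<in>set bs. in_ker n P b"
      "\<forall>a\<in>A. in_ker n (L' - P) a" "\<forall>k. in_ker n L' k \<longrightarrow> in_ker n P k"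
      using Cons.IH[OF deflate(2,3)] by blast
    have split: "L - P = (L' - P) + R"
      by (simp add: L'_def)
    have "psd n (L - P)"
      unfolding split R_def by (intro psd_add P(3) psd_rank_one) (use 2 in simp)
    moreover have "in_ker n (L - P) a" if "a \<in> A" for a
    proof -
      have "dotp n a l = 0"
        using Cons.prems(3) that by (simp add: l_def dotp_column)
      then show ?thesis
        unfolding split R_def using P(5) that by (intro in_ker_add in_ker_rank_one) auto
    qed
    moreover have "\<forall>b'\<in>set (b # bs). in_ker n P b'"
      using P(4,6) deflate(4) by simp
    ultimately show ?thesis
      using P(1,2,6) deflate(5) by blast
  qed
qed

lemma orth_add: "u \<in> orth n S \<Longrightarrow> w \<in> orth n S \<Longrightarrow> (\<lambda>i. u i + w i) \<in> orth n S"
  by (simp add: orth_def dotp_def algebra_simps sum.distrib)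

lemma column_in_orth: "\<forall>s\<in>S. in_ker n G s \<Longrightarrow> i \<le> n \<Longrightarrow> (\<lambda>k. G k i) \<in> orth n S"
  by (simp add: orth_def in_ker_def)

lemma bilin_eq_0_on_orth:
  assumes "symm_mat n Q" "\<forall>z\<in>orth n S. bilin n Q z z = 0" "u \<in> orth n S" "w \<in> orth n S"
  shows "bilin n Q u w = 0"
proof -
  have "0 = bilin n Q (\<lambda>i. u i + w i) (\<lambda>i. u i + w i)"
    using assms(2) orth_add[OF assms(3,4)] by simp
  also have "\<dots> = bilin n Q u u + bilin n Q u w + bilin n Q w u + bilin n Q w w"
    by (simp add: bilin_add_left bilin_add_right)
  also have "\<dots> = 2 * bilin n Q u w"
    using assms bilin_commute[OF assms(1), of w u] by simp
  finally show ?thesis by simp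
qed

lemma trace_prod_diff: "trace_prod n (G - H) Q = trace_prod n G Q - trace_prod n H Q"
  by (simp add: trace_prod_def algebra_simps sum_subtractf)

lemma trace_prod_add: "trace_prod n (G + H) Q = trace_prod n G Q + trace_prod n H Q"
  by (simp add: trace_prod_def algebra_simps sum.distrib)

lemma trace_prod_rank_one: "trace_prod n (rank_one c u w) Q = c * bilin n Q u w"
  by (simp add: trace_prod_def rank_one_def bilin_def sum_distrib_left mult_ac)

definition row_support :: "nat \<Rightarrow> rmat \<Rightarrow> nat set" where
  "row_support n G = {i. i \<le> n \<and> (\<exists>j\<le>n. G i j \<noteq> 0)}"

text \<open>The corrections are chosen so that row \<open>i\<close> cancels: \<open>G' i l = G i l - G l i = 0\<close>.\<close>

lemma symmetric_row_elimination:
  assumes G: "symm_mat n G" and ij: "i \<le> n" "j \<le> n" "G i j \<noteq> 0"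
    and u: "u = (\<lambda>k. G k i)" and w: "w = (\<lambda>k. G k j)"
    and G': "G' = G - rank_one (1 / G i j) u w - rank_one (1 / G i j) w u
                   + rank_one (G i i / (G i j)\<^sup>2) w w"
  shows "symm_mat n G'" and "row_support n G' \<subset> row_support n G"
proof -
  show "symm_mat n G'"
    using G by (auto simp: symm_mat_def G' rank_one_def u w mult_ac)
  have "G' i l = 0" if "l \<le> n" for l
    using ij G that by (simp add: G' rank_one_def u w symm_mat_def field_simps power2_eq_square)
  then have "i \<notin> row_support n G'" by (simp add: row_support_def)
  moreover have "i \<in> row_support n G" using ij by (auto simp: row_support_def)
  moreover have "row_support n G' \<subseteq> row_support n G"
  proof
    fix k assume "k \<in> row_support n G'"
    then obtain l where "k \<le> n" "l \<le> n" "G' k l \<noteq> 0" by (auto simp: row_support_def)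
    then show "k \<in> row_support n G"
      by (rule_tac ccontr) (use ij in \<open>auto simp: row_support_def G' rank_one_def u w\<close>)
  qed
  ultimately show "row_support n G' \<subset> row_support n G" by blast
qed

text \<open>The elimination writes \<open>G\<close> as a sum of rank-one matrices \<open>u w\<^sup>T\<close> with \<open>u, w \<in> orth n S\<close>,
  and by polarization \<open>Q\<close> vanishes on each of them.\<close>

lemma trace_prod_eq_0_if_vanishing_on_orth:
  assumes Q: "symm_mat n Q" "\<forall>z\<in>orth n S. bilin n Q z z = 0"
    and "symm_mat n G" "\<forall>s\<in>S. in_ker n G s"
  shows "trace_prod n G Q = 0"
  using assms(3,4)
proof (induction "card (row_support n G)" arbitrary: G rule: less_induct)
  case less
  show ?case
  proof (cases "row_support n G = {}")
    case True
    then show ?thesis by (simp add: row_support_def trace_prod_def)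
  next
    case False
    then obtain i j where ij: "i \<le> n" "j \<le> n" "G i j \<noteq> 0" by (auto simp: row_support_def)
    define u where "u = (\<lambda>k. G k i)"
    define w where "w = (\<lambda>k. G k j)"
    define G' where "G' = G - rank_one (1 / G i j) u w - rank_one (1 / G i j) w u
                            + rank_one (G i i / (G i j)\<^sup>2) w w"
    note elim = symmetric_row_elimination[OF less.prems(1) ij u_def w_def G'_def]
    have uw: "u \<in> orth n S" "w \<in> orth n S"
      unfolding u_def w_def using column_in_orth[OF less.prems(2)] ij by auto
    have "trace_prod n G' Q = trace_prod n G Q"
      using bilin_eq_0_on_orth[OF Q] uw
      by (simp add: G'_def trace_prod_add trace_prod_diff trace_prod_rank_one)
    moreover have "\<forall>s\<in>S. in_ker n G' s"
      using less.prems(2) uw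
      by (auto simp: G'_def orth_def intro!: in_ker_add in_ker_diff in_ker_rank_one)
    moreover have "card (row_support n G') < card (row_support n G)"
      by (rule psubset_card_mono[OF _ elim(2)]) (simp add: row_support_def)
    ultimately show ?thesis
      using less.hyps elim(1) by metis
  qed
qed

section \<open>Gram matrices and the Hankel spectrahedron\<close>

definition gram :: "rpoly \<Rightarrow> rmat" where
  "gram L i j = Poly_Mapping.lookup L (quad_monom i j)"

lemma symm_mat_gram: "symm_mat n (gram L)"
  by (simp add: symm_mat_def gram_def quad_monom_comm)

lemma gram_diff: "gram (L - M) = gram L - gram M"
  by (simp add: fun_eq_iff gram_def lookup_minus)

lemma gram_combination: "gram (t *\<^sub>R a + s *\<^sub>R c) = (\<lambda>i j. t * gram a i j + s * gram c i j)"
  by (simp add: fun_eq_iff gram_def lookup_add lookup_scaleR)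

lemma symm_mat_quad_coeff: "symm_mat n (quad_coeff q)"
  by (simp add: symm_mat_def quad_coeff_def quad_monom_comm)

lemma pairing_eq_sum:
  assumes "finite F" "Poly_Mapping.keys L \<subseteq> F"
  shows "pairing L p = (\<Sum>m\<in>F. Poly_Mapping.lookup p m * Poly_Mapping.lookup L m)"
proof -
  have "pairing L p =
      (\<Sum>m\<in>Poly_Mapping.keys p \<union> F. Poly_Mapping.lookup p m * Poly_Mapping.lookup L m)"
    unfolding pairing_def by (rule sum.mono_neutral_left) (use assms in \<open>auto simp: in_keys_iff\<close>)
  also have "\<dots> = (\<Sum>m\<in>F. Poly_Mapping.lookup p m * Poly_Mapping.lookup L m)"
    by (rule sum.mono_neutral_right) (use assms in \<open>auto simp: in_keys_iff\<close>)
  finally show ?thesis .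
qed

lemma linear_pairing: "linear (pairing L)"
  by (rule linearI)
    (simp_all add: pairing_eq_sum[of "Poly_Mapping.keys L"] lookup_add lookup_scaleR
      distrib_right sum.distrib sum_distrib_left mult.assoc)

lemma pairing_diff_left: "pairing (L - M) p = pairing L p - pairing M p"
  by (simp add: pairing_def lookup_minus right_diff_distrib sum_subtractf)

lemma pairing_combination_left:
  "pairing (a *\<^sub>R L1 + b *\<^sub>R L2) p = a * pairing L1 p + b * pairing L2 p"
  by (simp add: pairing_def lookup_add lookup_scaleR algebra_simps sum.distrib sum_distrib_left)

lemma pairing_sum: "pairing L (sum f A) = (\<Sum>x\<in>A. pairing L (f x))"
  using linear_sum[OF linear_pairing] by blast

lemma pairing_scaleR_single:
  "pairing L (c *\<^sub>R Poly_Mapping.single m 1) = c * Poly_Mapping.lookup L m"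
  by (simp add: single_scaleR pairing_def)

lemma pairing_quadratic_form:
  assumes "q \<in> homog n 2"
  shows "pairing L q = trace_prod n (gram L) (quad_coeff q)"
  by (subst quadratic_form_expand[OF assms])
    (simp add: pairing_sum pairing_scaleR_single trace_prod_def gram_def mult.commute)

lemma pairing_square:
  assumes "f \<in> homog n 1"
  shows "pairing L (f * f) = bilin n (gram L) (lin_coeff f) (lin_coeff f)"
  by (subst mult_linear_forms_expand[OF assms assms])
    (simp add: pairing_sum pairing_scaleR_single bilin_def gram_def mult_ac)

lemma sum_squares_homog: "set fs \<subseteq> homog n 1 \<Longrightarrow> (\<Sum>f\<leftarrow>fs. f * f) \<in> homog n 2"
  by (induction fs) (auto simp: homog_zero intro!: homog_add mult_linear_forms_homog)

lemma pairing_sum_squares_nonneg: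
  assumes "set fs \<subseteq> homog n 1" "psd n (gram L)"
  shows "pairing L (\<Sum>f\<leftarrow>fs. f * f) \<ge> 0"
  using assms(1)
proof (induction fs)
  case Nil
  then show ?case by (simp add: pairing_def)
next
  case (Cons f fs)
  then have "f \<in> homog n 1" by simp
  then have "pairing L (f * f) \<ge> 0"
    using assms(2) by (simp add: pairing_square psd_def)
  with Cons show ?case
    using linear_add[OF linear_pairing] by simp
qed

lemma hankel_iff:
  assumes "0 \<in> I"
  shows "L \<in> hankel n I \<longleftrightarrow> Poly_Mapping.keys L \<subseteq> quad_monoms n \<and> psd n (gram L)
           \<and> (\<forall>q\<in>I \<inter> homog n 2. pairing L q = 0)"
proof
  assume L: "L \<in> hankel n I"
  have "0 \<le> bilin n (gram L) c c" for c
  proof -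
    define f where "f = (\<Sum>i\<le>n. c i *\<^sub>R var i)"
    have f: "f \<in> homog n 1" unfolding f_def by (rule sum_var_homog)
    have "f * f \<in> sos_cone n I"
      unfolding sos_cone_def using f assms by (auto intro!: exI[of _ "[f]"] mult_linear_forms_homog)
    then have "0 \<le> pairing L (f * f)" using L by (auto simp: hankel_def)
    also have "pairing L (f * f) = bilin n (gram L) (lin_coeff f) (lin_coeff f)"
      by (rule pairing_square[OF f])
    also have "\<dots> = bilin n (gram L) c c"
      unfolding bilin_def f_def by (intro sum.cong refl) (simp add: lin_coeff_sum_var)
    finally show ?thesis .
  qed
  then show "Poly_Mapping.keys L \<subseteq> quad_monoms n \<and> psd n (gram L)
      \<and> (\<forall>q\<in>I \<inter> homog n 2. pairing L q = 0)"
    using L by (auto simp: psd_def hankel_def quad_dual_def quad_monoms_def)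
next
  assume h: "Poly_Mapping.keys L \<subseteq> quad_monoms n \<and> psd n (gram L)
    \<and> (\<forall>q\<in>I \<inter> homog n 2. pairing L q = 0)"
  have "pairing L q \<ge> 0" if q: "q \<in> sos_cone n I" for q
  proof -
    obtain fs where fs: "set fs \<subseteq> homog n 1" "q - (\<Sum>f\<leftarrow>fs. f * f) \<in> I" and qh: "q \<in> homog n 2"
      using q by (auto simp: sos_cone_def)
    have "q - (\<Sum>f\<leftarrow>fs. f * f) \<in> I \<inter> homog n 2"
      using fs homog_diff[OF qh sum_squares_homog] by simp
    then have "pairing L (q - (\<Sum>f\<leftarrow>fs. f * f)) = 0" using h by blast
    moreover have "pairing L (\<Sum>f\<leftarrow>fs. f * f) \<ge> 0"
      using pairing_sum_squares_nonneg fs(1) h by blast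
    ultimately show ?thesis
      using linear_diff[OF linear_pairing] by (metis diff_ge_0_iff_ge eq_iff_diff_eq_0)
  qed
  then show "L \<in> hankel n I"
    using h by (auto simp: hankel_def quad_dual_def quad_monoms_def)
qed

lemma hankel_nonneg_combination:
  assumes "0 \<in> I" "L1 \<in> hankel n I" "L2 \<in> hankel n I" "a \<ge> 0" "b \<ge> 0"
  shows "a *\<^sub>R L1 + b *\<^sub>R L2 \<in> hankel n I"
proof -
  have "Poly_Mapping.keys L1 \<subseteq> quad_monoms n" "Poly_Mapping.keys L2 \<subseteq> quad_monoms n"
    using assms(2,3) hankel_iff[OF assms(1)] by blast+
  then have "Poly_Mapping.keys (a *\<^sub>R L1 + b *\<^sub>R L2) \<subseteq> quad_monoms n"
    using keys_add[of "a *\<^sub>R L1" "b *\<^sub>R L2"] keys_scaleR[of a L1] keys_scaleR[of b L2] by blast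
  moreover have "psd n (gram (a *\<^sub>R L1 + b *\<^sub>R L2))"
    using assms by (simp add: hankel_iff gram_combination psd_def bilin_def algebra_simps
        sum.distrib flip: sum_distrib_left)
  ultimately show ?thesis
    using assms by (simp add: hankel_iff pairing_combination_left)
qed

lemma convex_hankel: "0 \<in> I \<Longrightarrow> convex (hankel n I)"
  unfolding convex_def using hankel_nonneg_combination by blast

lemma hankel_antimono: "J \<subseteq> I \<Longrightarrow> 0 \<in> J \<Longrightarrow> hankel n I \<subseteq> hankel n J"
  using hankel_iff[of J] hankel_iff[of I] by blast

lemma closed_subscheme_is_ideal: "closed_subscheme n I \<Longrightarrow> is_ideal n I"
  by (simp add: closed_subscheme_def hom_ideal_def)

lemma ideal_scaleR: "is_ideal n I \<Longrightarrow> a \<in> I \<Longrightarrow> c *\<^sub>R a \<in> I"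
  unfolding scaleR_conv_mult_single is_ideal_def by (auto simp: Rn_def)

lemma subspace_ideal_homog: "is_ideal n I \<Longrightarrow> subspace (I \<inter> homog n d)"
  unfolding subspace_def using ideal_scaleR homog_scaleR homog_add homog_zero
  by (auto simp: is_ideal_def)

lemma in_ker_gram_if_perp:
  assumes "is_ideal n I" "\<forall>q\<in>I \<inter> homog n 2. pairing M q = 0" "s \<in> lin_vecs n I"
  shows "in_ker n (gram M) s"
proof -
  obtain a where a: "a \<in> I \<inter> homog n 1" "s = lin_coeff a"
    using assms(3) by (auto simp: lin_vecs_def)
  have "bilin n (gram M) s d = pairing M (a * (\<Sum>i\<le>n. d i *\<^sub>R var i))" for d
    by (simp add: mult_linear_forms_expand[OF a(1)[THEN IntD2] sum_var_homog] a(2)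
        pairing_sum pairing_scaleR_single bilin_def gram_def lin_coeff_sum_var mult_ac)
  moreover have "a * (\<Sum>i\<le>n. d i *\<^sub>R var i) \<in> I \<inter> homog n 2" for d
  proof -
    have "(\<Sum>i\<le>n. d i *\<^sub>R var i) \<in> Rn n"
      using homog_subset_Rn sum_var_homog by blast
    then have "a * (\<Sum>i\<le>n. d i *\<^sub>R var i) \<in> I"
      using assms(1) a(1) by (simp add: is_ideal_def mult.commute)
    then show ?thesis
      using a(1) mult_linear_forms_homog[OF _ sum_var_homog] by blast
  qed
  ultimately show ?thesis
    using assms(2) by (simp add: in_ker_iff_bilin)
qed

text \<open>Off the diagonal, the entry \<open>G i j\<close> is halved because it is counted as both \<open>(i, j)\<close> and
  \<open>(j, i)\<close>.\<close>

definition functional_of_gram :: "nat \<Rightarrow> rmat \<Rightarrow> rpoly" where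
  "functional_of_gram n G =
     (\<Sum>i\<le>n. \<Sum>j\<le>n. Poly_Mapping.single (quad_monom i j) ((if i = j then 1 else 1 / 2) * G i j))"

lemma lookup_functional_of_gram:
  "Poly_Mapping.lookup (functional_of_gram n G) m
     = (\<Sum>i\<le>n. \<Sum>j\<le>n. if quad_monom i j = m then (if i = j then 1 else 1 / 2) * G i j else 0)"
  by (simp add: functional_of_gram_def lookup_sum lookup_single when_def)

lemma keys_functional_of_gram: "Poly_Mapping.keys (functional_of_gram n G) \<subseteq> quad_monoms n"
proof
  fix m assume m: "m \<in> Poly_Mapping.keys (functional_of_gram n G)"
  show "m \<in> quad_monoms n"
  proof (rule ccontr)
    assume "m \<notin> quad_monoms n"
    then have "Poly_Mapping.lookup (functional_of_gram n G) m = 0"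
      by (auto simp: lookup_functional_of_gram intro!: sum.neutral quad_monom_in_quad_monoms)
    then show False using m by (simp add: in_keys_iff)
  qed
qed

lemma gram_functional_of_gram:
  assumes "symm_mat n G" "a \<le> n" "b \<le> n"
  shows "gram (functional_of_gram n G) a b = G a b"
proof -
  have "gram (functional_of_gram n G) a b = (if a = b then G a a else G a b / 2 + G b a / 2)"
    using assms(2,3)
    by (simp add: gram_def lookup_functional_of_gram quad_monom_eq_iff sum_sum_symmetric_pair)
  then show ?thesis
    using assms by (auto simp: symm_mat_def)
qed


section \<open>Splitting a functional along two subspaces\<close>

lemma linear_extension_vanishing:
  fixes \<phi> :: "'a::real_vector \<Rightarrow> 'b::real_vector"
  assumes S: "subspace S" and T: "subspace T" and \<phi>: "linear \<phi>" and perp: "\<forall>x\<in>S \<inter> T. \<phi> x = 0"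
  shows "\<exists>g. linear g \<and> (\<forall>x\<in>S. g x = \<phi> x) \<and> (\<forall>x\<in>T. g x = 0)"
proof -
  obtain Bt where Bt: "Bt \<subseteq> T" "independent Bt" "T \<subseteq> span Bt"
    by (rule basis_exists[of T])
  obtain B where B: "Bt \<subseteq> B" "B \<subseteq> T \<union> S" "independent B" "T \<union> S \<subseteq> span B"
    by (rule maximal_independent_subset_extend[of Bt "T \<union> S"]) (use Bt in auto)
  obtain g where g: "linear g" "\<forall>x\<in>B. g x = (if x \<in> Bt then 0 else \<phi> x)"
    using linear_independent_extend[OF B(3), of "\<lambda>x. if x \<in> Bt then 0 else \<phi> x"] by blast
  have g_Bt: "g x = 0" if "x \<in> span Bt" for x
    by (rule linear_eq_0_on_span[OF g(1) _ that]) (use g(2) B(1) in auto)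
  have BS: "B - Bt \<subseteq> S"
  proof
    fix b assume b: "b \<in> B - Bt"
    show "b \<in> S"
    proof (rule ccontr)
      assume "b \<notin> S"
      then have "b \<in> span Bt" using b B(2) Bt(3) by blast
      moreover have "span Bt \<subseteq> span (B - {b})" using b B(1) by (intro span_mono) blast
      ultimately show False using b B(3) unfolding dependent_def by blast
    qed
  qed
  have "g s = \<phi> s" if s: "s \<in> S" for s
  proof -
    have "Bt \<union> (B - Bt) = B" using B(1) by blast
    then have "s \<in> span (Bt \<union> (B - Bt))" using s B(4) by auto
    then obtain x y where xy: "s = x + y" "x \<in> span Bt" "y \<in> span (B - Bt)"
      unfolding span_Un by blast
    have "y \<in> S" using span_minimal[OF BS S] xy(3) by blast
    then have "x \<in> S" using subspace_diff[OF S s] xy(1) by force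
    moreover have "x \<in> T" using span_minimal[OF Bt(1) T] xy(2) by blast
    moreover have "g y = \<phi> y"
      by (rule linear_eq_on_span[OF g(1) \<phi> _ xy(3)]) (use g(2) in auto)
    ultimately show ?thesis
      using xy g_Bt perp linear_add[OF g(1)] linear_add[OF \<phi>] by simp
  qed
  moreover have "g t = 0" if "t \<in> T" for t
    using g_Bt Bt(3) that by blast
  ultimately show ?thesis
    using g(1) by blast
qed

lemma functional_on_quadrics:
  fixes g :: "rpoly \<Rightarrow> real"
  assumes "linear g"
  shows "\<exists>M. Poly_Mapping.keys M \<subseteq> quad_monoms n \<and> (\<forall>q\<in>homog n 2. pairing M q = g q)"
proof -
  define M where "M = (\<Sum>m\<in>quad_monoms n. Poly_Mapping.single m (g (Poly_Mapping.single m 1)))"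
  have lookup_M:
    "Poly_Mapping.lookup M m = (if m \<in> quad_monoms n then g (Poly_Mapping.single m 1) else 0)" for m
    by (simp add: M_def lookup_sum lookup_single when_def finite_quad_monoms)
  have "pairing M q = g q" if q: "q \<in> homog n 2" for q
  proof -
    have "pairing M q =
        (\<Sum>m\<in>Poly_Mapping.keys q. Poly_Mapping.lookup q m * g (Poly_Mapping.single m 1))"
      unfolding pairing_def using homog_2_keys[OF q] by (intro sum.cong refl) (auto simp: lookup_M)
    also have "\<dots> = g (\<Sum>m\<in>Poly_Mapping.keys q. Poly_Mapping.lookup q m *\<^sub>R Poly_Mapping.single m 1)"
      by (simp add: linear_sum[OF assms] linear_cmul[OF assms])
    also have "(\<Sum>m\<in>Poly_Mapping.keys q. Poly_Mapping.lookup q m *\<^sub>R Poly_Mapping.single m 1) = q"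
      by (simp add: single_scaleR poly_mapping_sum_single[symmetric])
    finally show ?thesis .
  qed
  moreover have "Poly_Mapping.keys M \<subseteq> quad_monoms n"
    by (auto simp: in_keys_iff lookup_M split: if_splits)
  ultimately show ?thesis by blast
qed

lemma functional_split:
  assumes "is_ideal n I" "is_ideal n J" "\<forall>q\<in>(I \<inter> J) \<inter> homog n 2. pairing L q = 0"
  shows "\<exists>M. Poly_Mapping.keys M \<subseteq> quad_monoms n \<and> (\<forall>q\<in>I \<inter> homog n 2. pairing (L - M) q = 0)
           \<and> (\<forall>q\<in>J \<inter> homog n 2. pairing M q = 0)"
proof -
  obtain g where g: "linear g" "\<forall>q\<in>I \<inter> homog n 2. g q = pairing L q" "\<forall>q\<in>J \<inter> homog n 2. g q = 0"
    using linear_extension_vanishing[OF subspace_ideal_homog[OF assms(1)]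
        subspace_ideal_homog[OF assms(2)] linear_pairing] assms(3)
    by (metis (no_types, lifting) Int_iff)
  obtain M where "Poly_Mapping.keys M \<subseteq> quad_monoms n" "\<forall>q\<in>homog n 2. pairing M q = g q"
    using functional_on_quadrics[OF g(1)] by blast
  then show ?thesis
    using g(2,3) by (auto simp: pairing_diff_left)
qed

section \<open>Quadrics through the common zeros of the linear forms\<close>

definition vanishing_ideal :: "nat \<Rightarrow> (nat \<Rightarrow> real) \<Rightarrow> rpoly set" where
  "vanishing_ideal n z = {p \<in> Rn n. eval_poly p z = 0}"

lemma Rn_add: "a \<in> Rn n \<Longrightarrow> b \<in> Rn n \<Longrightarrow> a + b \<in> Rn n"
  unfolding Rn_def using keys_add[of a b] by blast

lemma Rn_mult: "a \<in> Rn n \<Longrightarrow> b \<in> Rn n \<Longrightarrow> a * b \<in> Rn n"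
  unfolding Rn_def using keys_mult[of a b] by (force simp: keys_add_monom)

lemma is_ideal_vanishing_ideal: "is_ideal n (vanishing_ideal n z)"
  unfolding is_ideal_def vanishing_ideal_def
  by (auto simp: eval_poly_zero eval_poly_add eval_poly_mult Rn_add Rn_mult) (auto simp: Rn_def)

lemma ideal_gen_vanishing: "S \<subseteq> vanishing_ideal n z \<Longrightarrow> ideal_gen n S \<subseteq> vanishing_ideal n z"
  unfolding ideal_gen_def using is_ideal_vanishing_ideal by blast

text \<open>The power \<open>x\<^sub>i\<^sub>0\<^sup>k\<close> of the irrelevant ideal does not vanish at \<open>z\<close>.\<close>

lemma sat_vanishing:
  assumes "i0 \<le> n" "z i0 \<noteq> 0" "\<forall>p\<in>K. eval_poly p z = 0" "f \<in> sat n K"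
  shows "eval_poly f z = 0"
proof -
  obtain k where k: "\<forall>g\<in>homog n k. g * f \<in> K" using assms(4) by (auto simp: sat_def)
  have "Poly_Mapping.single (Poly_Mapping.single i0 k) 1 \<in> homog n k"
    using assms(1) by (intro homog_single) (auto simp: mdeg_single)
  then have "eval_poly (Poly_Mapping.single (Poly_Mapping.single i0 k) 1 * f) z = 0"
    using k assms(3) by blast
  then have "z i0 ^ k * eval_poly f z = 0"
    by (simp add: eval_poly_mult eval_poly_single eval_monom_single)
  then show ?thesis using assms(2) by simp
qed

lemma span_ideal_vanishing:
  assumes "is_ideal n I" "\<forall>f\<in>I \<inter> homog n 1. eval_poly f z = 0" "i0 \<le> n" "z i0 \<noteq> 0"
    and "p \<in> span_ideal n I"
  shows "eval_poly p z = 0"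
proof -
  have "I \<inter> homog n 1 \<subseteq> vanishing_ideal n z"
    using assms(1,2) by (auto simp: vanishing_ideal_def is_ideal_def)
  then have "ideal_gen n (I \<inter> homog n 1) \<subseteq> vanishing_ideal n z"
    by (rule ideal_gen_vanishing)
  then have "\<forall>p\<in>ideal_gen n (I \<inter> homog n 1). eval_poly p z = 0"
    by (auto simp: vanishing_ideal_def)
  then show ?thesis
    using sat_vanishing[of i0 n z, OF assms(3,4)] assms(5) unfolding span_ideal_def by blast
qed

lemma ideal_sum_subset_sat:
  assumes "is_ideal n I" "is_ideal n J"
  shows "ideal_sum I J \<subseteq> sat n (ideal_sum I J)"
proof
  fix f assume "f \<in> ideal_sum I J"
  then obtain a b where ab: "f = a + b" "a \<in> I" "b \<in> J" by (auto simp: ideal_sum_def)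
  have "a \<in> Rn n" "b \<in> Rn n" using ab assms by (auto simp: is_ideal_def)
  then have "f \<in> Rn n" using ab(1) Rn_add by simp
  moreover have "g * f \<in> ideal_sum I J" if "g \<in> homog n 0" for g
  proof -
    have "g \<in> Rn n" using that homog_subset_Rn by blast
    moreover have "g * f = g * a + g * b" using ab(1) by (simp add: distrib_left)
    ultimately show ?thesis
      using ab(2,3) assms unfolding ideal_sum_def is_ideal_def by blast
  qed
  ultimately show "f \<in> sat n (ideal_sum I J)" unfolding sat_def by blast
qed

lemma inter_ideal_commute: "inter_ideal n I J = inter_ideal n J I"
proof -
  have "ideal_sum I J = ideal_sum J I"
    unfolding ideal_sum_def by (auto; metis add.commute)
  then show ?thesis by (simp add: inter_ideal_def)
qed

text \<open>Here the hypothesis \<open>X \<inter> Y = Span(X) \<inter> Span(Y)\<close> enters: a common real zero \<open>z\<close> of the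
  linear forms of \<open>X\<close> and \<open>Y\<close> lies on \<open>Span(X) \<inter> Span(Y)\<close>, hence on \<open>X \<inter> Y\<close>.\<close>

lemma quadric_vanishes_on_orth:
  assumes X: "closed_subscheme n IX" and Y: "closed_subscheme n IY"
    and H: "inter_ideal n IX IY = inter_ideal n (span_ideal n IX) (span_ideal n IY)"
    and q: "q \<in> (IX \<union> IY) \<inter> homog n 2" and z: "z \<in> orth n (lin_vecs n (IX \<union> IY))"
  shows "bilin n (quad_coeff q) z z = 0"
proof -
  have iX: "is_ideal n IX" and iY: "is_ideal n IY"
    using X Y by (simp_all add: closed_subscheme_is_ideal)
  have qh: "q \<in> homog n 2" using q by blast
  have "bilin n (quad_coeff q) z z = eval_poly q z"
    by (simp add: eval_quadratic_form[OF qh] bilin_def mult_ac)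
  also have "eval_poly q z = 0"
  proof (cases "\<exists>i0\<le>n. z i0 \<noteq> 0")
    case True
    then obtain i0 where i0: "i0 \<le> n" "z i0 \<noteq> 0" by blast
    have lin: "eval_poly f z = 0" if "f \<in> (IX \<union> IY) \<inter> homog n 1" for f
      using z that by (auto simp: orth_def lin_vecs_def dotp_def eval_linear_form)
    have "\<forall>p\<in>ideal_sum (span_ideal n IX) (span_ideal n IY). eval_poly p z = 0"
      using span_ideal_vanishing[of n IX z i0, OF iX _ i0]
        span_ideal_vanishing[of n IY z i0, OF iY _ i0] lin
      by (fastforce simp: ideal_sum_def eval_poly_add)
    then have "\<forall>p\<in>inter_ideal n IX IY. eval_poly p z = 0"
      using sat_vanishing[of i0 n z, OF i0] H by (simp add: inter_ideal_def)
    moreover have "q \<in> ideal_sum IX IY"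
      using q iX iY unfolding ideal_sum_def is_ideal_def by (auto intro: exI[of _ 0] exI[of _ q])
    ultimately show ?thesis
      using ideal_sum_subset_sat[OF iX iY] by (auto simp: inter_ideal_def)
  next
    case False
    then show ?thesis by (simp add: eval_quadratic_form[OF qh])
  qed
  finally show ?thesis .
qed

lemma pairing_eq_if_gram_diff_in_ker:
  assumes X: "closed_subscheme n IX" and Y: "closed_subscheme n IY"
    and H: "inter_ideal n IX IY = inter_ideal n (span_ideal n IX) (span_ideal n IY)"
    and ker: "\<forall>s\<in>lin_vecs n (IX \<union> IY). in_ker n (gram N - gram M) s"
    and q: "q \<in> (IX \<union> IY) \<inter> homog n 2"
  shows "pairing N q = pairing M q"
proof -
  have "trace_prod n (gram N - gram M) (quad_coeff q) = 0"
    using trace_prod_eq_0_if_vanishing_on_orth[OF symm_mat_quad_coeff _ _ ker]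
      quadric_vanishes_on_orth[OF X Y H q] symm_mat_gram[of n "N - M"]
    by (simp add: gram_diff)
  moreover have "q \<in> homog n 2" using q by blast
  ultimately show ?thesis
    by (simp add: pairing_quadratic_form trace_prod_diff)
qed

lemma subspace_in_ker_lin_coeff: "subspace {f. in_ker n G (lin_coeff f)}"
  unfolding subspace_def
  by (simp add: in_ker_def dotp_def lin_coeff_def lookup_add lookup_scaleR algebra_simps
      sum.distrib flip: sum_distrib_left)

lemma finite_spanning_list:
  assumes "is_ideal n I"
  obtains bs where "set bs \<subseteq> lin_vecs n I"
    and "\<And>G. \<forall>b\<in>set bs. in_ker n G b \<Longrightarrow> \<forall>s\<in>lin_vecs n I. in_ker n G s"
proof -
  let ?V = "I \<inter> homog n 1"
  obtain B where B: "B \<subseteq> ?V" "independent B" "?V \<subseteq> span B"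
    by (rule basis_exists[of ?V])
  have "?V \<subseteq> span (var ` {..n})"
  proof
    fix f assume "f \<in> ?V"
    then have "f = (\<Sum>i\<le>n. lin_coeff f i *\<^sub>R var i)" using linear_form_expand by blast
    also have "\<dots> \<in> span (var ` {..n})"
      by (intro span_sum span_scale span_base) auto
    finally show "f \<in> span (var ` {..n})" .
  qed
  then have "finite B"
    using independent_span_bound[of "var ` {..n}" B] B by auto
  then obtain xs where xs: "set xs = B" using finite_list by blast
  show ?thesis
  proof
    show "set (map lin_coeff xs) \<subseteq> lin_vecs n I"
      using xs B(1) by (auto simp: lin_vecs_def)
  next
    fix G assume "\<forall>b\<in>set (map lin_coeff xs). in_ker n G b"
    then have "f \<in> {f. in_ker n G (lin_coeff f)}" if "f \<in> span B" for f
      using span_minimal[OF _ subspace_in_ker_lin_coeff, of B n G] xs that by auto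
    then show "\<forall>s\<in>lin_vecs n I. in_ker n G s"
      using B(3) by (auto simp: lin_vecs_def)
  qed
qed


section \<open>The Hankel spectrahedron of the union\<close>

lemma psd_gram_split:
  assumes "is_ideal n IY" "psd n (gram L)"
    and LM: "\<forall>s\<in>lin_vecs n IX. in_ker n (gram (L - M)) s"
    and M: "\<forall>s\<in>lin_vecs n IY. in_ker n (gram M) s"
  obtains P where "symm_mat n P" "psd n P" "psd n (gram L - P)"
    "\<forall>s\<in>lin_vecs n IY. in_ker n P s" "\<forall>s\<in>lin_vecs n IX. in_ker n (gram L - P) s"
proof -
  obtain bs where bs: "set bs \<subseteq> lin_vecs n IY"
    "\<And>G. \<forall>b\<in>set bs. in_ker n G b \<Longrightarrow> \<forall>s\<in>lin_vecs n IY. in_ker n G s"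
    using finite_spanning_list[OF assms(1)] by blast
  have "bilin n (gram L) b a = 0" if "a \<in> lin_vecs n IX" "b \<in> set bs" for a b
  proof -
    have "bilin n (gram L) b a = bilin n (gram (L - M)) a b + bilin n (gram M) b a"
      using bilin_commute[OF symm_mat_gram, of n "L - M" a b]
      by (simp add: gram_diff bilin_diff_mat)
    then show ?thesis
      using LM M bs(1) that by (auto simp: in_ker_iff_bilin)
  qed
  then obtain P where "symm_mat n P" "psd n P" "psd n (gram L - P)" "\<forall>b\<in>set bs. in_ker n P b"
    "\<forall>a\<in>lin_vecs n IX. in_ker n (gram L - P) a"
    using psd_schur_split[OF symm_mat_gram assms(2), of "lin_vecs n IX" bs] by blast
  then show ?thesis
    using that bs(2) by blast
qed

lemma hankel_mem_if_gram_diff_in_ker: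
  assumes X: "closed_subscheme n IX" and Y: "closed_subscheme n IY"
    and H: "inter_ideal n IX IY = inter_ideal n (span_ideal n IX) (span_ideal n IY)"
    and I: "is_ideal n I" "I \<subseteq> IX \<union> IY"
    and N: "Poly_Mapping.keys N \<subseteq> quad_monoms n" "\<And>i j. i \<le> n \<Longrightarrow> j \<le> n \<Longrightarrow> gram N i j = G i j"
    and "psd n G" and M: "\<forall>q\<in>I \<inter> homog n 2. pairing M q = 0"
    and ker: "\<forall>s\<in>lin_vecs n (IX \<union> IY). in_ker n (G - gram M) s"
  shows "N \<in> hankel n I"
proof -
  have "\<forall>s\<in>lin_vecs n (IX \<union> IY). in_ker n (gram N - gram M) s"
    using ker in_ker_cong[of n "gram N - gram M" "G - gram M"] N(2) by simp
  then have "pairing N q = 0" if "q \<in> I \<inter> homog n 2" for q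
    using pairing_eq_if_gram_diff_in_ker[OF X Y H] M I(2) that by fastforce
  moreover have "psd n (gram N)"
    using psd_cong[of n "gram N" G] N(2) \<open>psd n G\<close> by simp
  moreover have "0 \<in> I" using I(1) by (simp add: is_ideal_def)
  ultimately show ?thesis
    using N(1) by (simp add: hankel_iff)
qed

lemma hankel_decompose:
  assumes X: "closed_subscheme n IX" and Y: "closed_subscheme n IY"
    and H: "inter_ideal n IX IY = inter_ideal n (span_ideal n IX) (span_ideal n IY)"
    and L: "L \<in> hankel n (IX \<inter> IY)"
  obtains N1 N2 where "N1 \<in> hankel n IX" "N2 \<in> hankel n IY" "L = N1 + N2"
proof -
  have iX: "is_ideal n IX" and iY: "is_ideal n IY"
    using X Y by (simp_all add: closed_subscheme_is_ideal)
  then have "0 \<in> IX \<inter> IY" by (simp add: is_ideal_def)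
  then have hL: "Poly_Mapping.keys L \<subseteq> quad_monoms n" "psd n (gram L)"
    "\<forall>q\<in>(IX \<inter> IY) \<inter> homog n 2. pairing L q = 0"
    using L hankel_iff by blast+
  obtain M where M: "\<forall>q\<in>IX \<inter> homog n 2. pairing (L - M) q = 0" "\<forall>q\<in>IY \<inter> homog n 2. pairing M q = 0"
    using functional_split[OF iX iY hL(3)] by blast
  note in_ker_M = in_ker_gram_if_perp[OF iY M(2)] and in_ker_LM = in_ker_gram_if_perp[OF iX M(1)]
  obtain P where P: "symm_mat n P" "psd n P" "psd n (gram L - P)"
    "\<forall>s\<in>lin_vecs n IY. in_ker n P s" "\<forall>s\<in>lin_vecs n IX. in_ker n (gram L - P) s"
    using psd_gram_split[OF iY hL(2)] in_ker_M in_ker_LM by metis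
  have ker: "\<forall>s\<in>lin_vecs n (IX \<union> IY). in_ker n (P - gram M) s"
  proof
    fix s assume s: "s \<in> lin_vecs n (IX \<union> IY)"
    show "in_ker n (P - gram M) s"
    proof (cases "s \<in> lin_vecs n IY")
      case True
      then show ?thesis using P(4) in_ker_M by (blast intro: in_ker_diff)
    next
      case False
      then have "in_ker n (gram (L - M) - (gram L - P)) s"
        using s P(5) in_ker_LM by (auto simp: lin_vecs_Un intro: in_ker_diff)
      moreover have "gram (L - M) - (gram L - P) = P - gram M"
        by (simp add: gram_diff fun_eq_iff)
      ultimately show ?thesis by simp
    qed
  qed
  define N2 where "N2 = functional_of_gram n P"
  have gram_N2: "gram N2 i j = P i j" if "i \<le> n" "j \<le> n" for i j
    using gram_functional_of_gram[OF P(1) that] by (simp add: N2_def)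
  have "N2 \<in> hankel n IY"
    using hankel_mem_if_gram_diff_in_ker[OF X Y H iY _ _ gram_N2 P(2) M(2) ker]
      keys_functional_of_gram by (simp add: N2_def)
  moreover have "L - N2 \<in> hankel n IX"
  proof (rule hankel_mem_if_gram_diff_in_ker[OF X Y H iX _ _ _ P(3) M(1)])
    show "Poly_Mapping.keys (L - N2) \<subseteq> quad_monoms n"
      using keys_diff[of L N2] hL(1) keys_functional_of_gram[of n P] by (auto simp: N2_def)
    show "gram (L - N2) i j = (gram L - P) i j" if "i \<le> n" "j \<le> n" for i j
      using that by (simp add: gram_diff gram_N2)
    have eq: "gram L - P - gram (L - M) = gram M - P"
      by (simp add: gram_diff fun_eq_iff)
    show "\<forall>s\<in>lin_vecs n (IX \<union> IY). in_ker n (gram L - P - gram (L - M)) s"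
      unfolding eq using ker by (simp add: in_ker_swap_diff)
  qed simp
  ultimately show ?thesis
    using that[of "L - N2" N2] by simp
qed

lemma hankel_union_subset_hull:
  assumes X: "closed_subscheme n IX" and Y: "closed_subscheme n IY"
    and H: "inter_ideal n IX IY = inter_ideal n (span_ideal n IX) (span_ideal n IY)"
  shows "hankel n (IX \<inter> IY) \<subseteq> convex hull (hankel n IX \<union> hankel n IY)"
proof
  fix L assume "L \<in> hankel n (IX \<inter> IY)"
  then obtain N1 N2 where N: "N1 \<in> hankel n IX" "N2 \<in> hankel n IY" "L = N1 + N2"
    by (rule hankel_decompose[OF X Y H])
  have "is_ideal n IX" "is_ideal n IY"
    using X Y by (simp_all add: closed_subscheme_is_ideal)
  then have zero: "0 \<in> IX" "0 \<in> IY"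
    by (simp_all add: is_ideal_def)
  have "2 *\<^sub>R N1 \<in> hankel n IX" "2 *\<^sub>R N2 \<in> hankel n IY"
    using hankel_nonneg_combination[OF zero(1) N(1) N(1), of 2 0]
      hankel_nonneg_combination[OF zero(2) N(2) N(2), of 2 0] by simp_all
  then have "(1 / 2) *\<^sub>R (2 *\<^sub>R N1) + (1 / 2) *\<^sub>R (2 *\<^sub>R N2)
      \<in> convex hull (hankel n IX \<union> hankel n IY)"
    by (intro convexD[OF convex_convex_hull]) (auto intro: hull_inc)
  then show "L \<in> convex hull (hankel n IX \<union> hankel n IY)"
    by (simp add: N(3))
qed

text \<open>If a point of \<open>\<Sigma>\<^sup>*\<^sub>X\<close> is a strict convex combination of \<open>a\<close> and \<open>c\<close>, positive
  semidefiniteness forces \<open>gram a\<close> to kill the linear forms of \<open>X\<close>; splitting \<open>a\<close> as in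
  \<open>hankel_decompose\<close> then shows that \<open>a\<close> is orthogonal to \<open>I(X)\<^sub>2\<close>.\<close>

lemma hankel_mem_if_strict_combination:
  assumes X: "closed_subscheme n IX" and Y: "closed_subscheme n IY"
    and H: "inter_ideal n IX IY = inter_ideal n (span_ideal n IX) (span_ideal n IY)"
    and a: "a \<in> hankel n (IX \<inter> IY)" and c: "c \<in> hankel n (IX \<inter> IY)"
    and "t > 0" "s \<ge> 0" and x: "t *\<^sub>R a + s *\<^sub>R c \<in> hankel n IX"
  shows "a \<in> hankel n IX"
proof -
  have iX: "is_ideal n IX" and iY: "is_ideal n IY"
    using X Y by (simp_all add: closed_subscheme_is_ideal)
  then have zero: "0 \<in> IX" "0 \<in> IX \<inter> IY" by (auto simp: is_ideal_def)
  have ha: "Poly_Mapping.keys a \<subseteq> quad_monoms n" "psd n (gram a)"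
    "\<forall>q\<in>(IX \<inter> IY) \<inter> homog n 2. pairing a q = 0"
    using a hankel_iff[OF zero(2)] by blast+
  have hc: "psd n (gram c)" using c hankel_iff[OF zero(2)] by blast
  have in_ker_a: "in_ker n (gram a) v" if "v \<in> lin_vecs n IX" for v
  proof -
    have "in_ker n (gram (t *\<^sub>R a + s *\<^sub>R c)) v"
      by (rule in_ker_gram_if_perp[OF iX _ that]) (use x hankel_iff[OF zero(1)] in blast)
    then show ?thesis
      by (intro in_ker_of_psd_combination[OF ha(2) symm_mat_gram hc \<open>t > 0\<close> \<open>s \<ge> 0\<close>])
        (simp add: gram_combination)
  qed
  obtain M where M: "\<forall>q\<in>IX \<inter> homog n 2. pairing (a - M) q = 0" "\<forall>q\<in>IY \<inter> homog n 2. pairing M q = 0"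
    using functional_split[OF iX iY ha(3)] by blast
  have gram_M: "gram a - gram (a - M) = gram M"
    by (simp add: gram_diff fun_eq_iff)
  have ker_M: "in_ker n (gram M) v" if "v \<in> lin_vecs n (IX \<union> IY)" for v
  proof (cases "v \<in> lin_vecs n IY")
    case True
    then show ?thesis using in_ker_gram_if_perp[OF iY M(2)] by blast
  next
    case False
    then have "v \<in> lin_vecs n IX" using that by (simp add: lin_vecs_Un)
    then show ?thesis
      using in_ker_diff[OF in_ker_a in_ker_gram_if_perp[OF iX M(1)]] gram_M by simp
  qed
  show ?thesis
    by (intro hankel_mem_if_gram_diff_in_ker[OF X Y H iX _ ha(1) _ ha(2) M(1)])
      (use ker_M in \<open>simp_all add: gram_M\<close>)
qed

lemma hankel_face_of_union:
  assumes X: "closed_subscheme n IX" and Y: "closed_subscheme n IY"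
    and H: "inter_ideal n IX IY = inter_ideal n (span_ideal n IX) (span_ideal n IY)"
  shows "hankel n IX face_of hankel n (IX \<inter> IY)"
proof -
  have "is_ideal n IX" "is_ideal n IY"
    using X Y by (simp_all add: closed_subscheme_is_ideal)
  then have zero: "0 \<in> IX" "0 \<in> IX \<inter> IY"
    by (simp_all add: is_ideal_def)
  have "a \<in> hankel n IX \<and> b \<in> hankel n IX"
    if ab: "a \<in> hankel n (IX \<inter> IY)" "b \<in> hankel n (IX \<inter> IY)"
      and x: "x \<in> hankel n IX" "x \<in> open_segment a b" for a b x
  proof -
    obtain u where u: "0 < u" "u < 1" "x = (1 - u) *\<^sub>R a + u *\<^sub>R b"
      using x(2) by (auto simp: in_segment)
    then show ?thesis
      using hankel_mem_if_strict_combination[OF X Y H ab, of "1 - u" u]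
        hankel_mem_if_strict_combination[OF X Y H ab(2,1), of u "1 - u"] x(1)
      by (simp add: add.commute)
  qed
  then show ?thesis
    unfolding face_of_def
    using hankel_antimono[OF _ zero(2)] convex_hankel[OF zero(1)] by blast
qed

theorem corollary5p4:
  fixes n :: nat and IX IY :: "rpoly set"
  assumes "closed_subscheme n IX" and "closed_subscheme n IY"
    and "inter_ideal n IX IY = inter_ideal n (span_ideal n IX) (span_ideal n IY)"
  shows "hankel n (IX \<inter> IY) = convex hull (hankel n IX \<union> hankel n IY)
         \<and> hankel n IX face_of hankel n (IX \<inter> IY)
         \<and> hankel n IY face_of hankel n (IX \<inter> IY)"
proof (intro conjI)
  have "is_ideal n IX" "is_ideal n IY"
    using assms(1,2) by (simp_all add: closed_subscheme_is_ideal)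
  then have zero: "0 \<in> IX \<inter> IY"
    by (simp add: is_ideal_def)
  have "hankel n IX \<union> hankel n IY \<subseteq> hankel n (IX \<inter> IY)"
    using hankel_antimono[OF _ zero] by blast
  then have "convex hull (hankel n IX \<union> hankel n IY) \<subseteq> hankel n (IX \<inter> IY)"
    by (rule hull_minimal) (rule convex_hankel[OF zero])
  then show "hankel n (IX \<inter> IY) = convex hull (hankel n IX \<union> hankel n IY)"
    using hankel_union_subset_hull[OF assms] by blast
  show "hankel n IX face_of hankel n (IX \<inter> IY)"
    by (rule hankel_face_of_union[OF assms])
  have "hankel n IY face_of hankel n (IY \<inter> IX)"
    using hankel_face_of_union[OF assms(2,1)] assms(3) by (simp add: inter_ideal_commute)
  then show "hankel n IY face_of hankel n (IX \<inter> IY)"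
    by (simp add: Int_commute)
qed

end
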